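(* Consider the following online optimization setting over $T$ rounds with decision space $[0,1)$. Before the game, an oblivious adversary fixes, for every round $t\in\{1,\dots,T\}$, probability distributions $D_{t,1},\dots,D_{t,k-1}$ supported in $(0,1)$ with densities bounded by $\sigma$, and values $v_{t,1},\dots,v_{t,k}\in[0,1]$. Nature independently draws $a'_{t,i}\sim D_{t,i}$; let $a_{t,1}\le\dots\le a_{t,k-1}$ be these points sorted, $a_{t,0}=0$, $a_{t,k}=1$, and define $f_t(x)=v_{t,i}$ for $x\in[a_{t,i-1},a_{t,i})$. In the full-information setting, run the following algorithm with $\eta=\sqrt{\log(k^2T^3\sigma)/((e-2)T)}$: set $F_1\equiv 0$ on $[0,1)$; for $t=1,\dots,T$, let $p_t(x)=\exp(\eta F_t(x))/\int_0^1\exp(\eta F_t(y))\,dy$, draw $x_t\sim p_t$, receive payoff $f_t(x_t)$, observe $f_t$, and set $F_{t+1}=F_t+f_t$. Then the expected regret $$\mathbb{E}\Bigl[\max_{x\in[0,1)}\sum_{t=1}^T f_t(x)-\sum_{t=1}^T f_t(x_t)\Bigr],$$ with expectation over both the algorithm's random choices and nature's draws, is at most $$2\sqrt{(e-2)\log(k^2T^3\sigma)\,T}+1.$$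
   Context: $\log$ denotes the natural logarithm. *)

theory Defs
  imports "HOL-Probability.Probability"
begin

text \<open>Nature's draws are a function a :: nat \<times> nat \<Rightarrow> real, a (t,i) = a'_{t,i}.
  Breakpoints a_{t,0} = 0, a_{t,i} = i-th smallest of a'_{t,1..k-1}, a_{t,k} = 1.\<close>
definition pts :: "nat \<Rightarrow> (nat \<times> nat \<Rightarrow> real) \<Rightarrow> nat \<Rightarrow> nat \<Rightarrow> real" where
  "pts k a t i = (if i = 0 then 0 else if k \<le> i then 1
                  else sort (map (\<lambda>j. a (t, j)) [1..<k]) ! (i - 1))"

definition payoff :: "nat \<Rightarrow> (nat \<Rightarrow> nat \<Rightarrow> real) \<Rightarrow> (nat \<times> nat \<Rightarrow> real) \<Rightarrow> nat \<Rightarrow> real \<Rightarrow> real" where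
  "payoff k v a t x = v t (LEAST i. x < pts k a t i)"

definition cum :: "nat \<Rightarrow> (nat \<Rightarrow> nat \<Rightarrow> real) \<Rightarrow> (nat \<times> nat \<Rightarrow> real) \<Rightarrow> nat \<Rightarrow> real \<Rightarrow> real" where
  "cum k v a t x = (\<Sum>s\<in>{1..<t}. payoff k v a s x)"

definition alg_density :: "real \<Rightarrow> nat \<Rightarrow> (nat \<Rightarrow> nat \<Rightarrow> real) \<Rightarrow> (nat \<times> nat \<Rightarrow> real) \<Rightarrow> nat \<Rightarrow> real \<Rightarrow> real" where
  "alg_density \<eta> k v a t x =
     indicator {0..<1} x * exp (\<eta> * cum k v a t x) /
     (\<integral>y. indicator {0..<1} y * exp (\<eta> * cum k v a t y) \<partial>lborel)"

text \<open>Joint law of the algorithm's choices x_1..x_T given nature's draws: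
  each x_t is drawn independently from p_t (p_t depends only on the observed f_s).\<close>
definition alg_measure :: "real \<Rightarrow> nat \<Rightarrow> (nat \<Rightarrow> nat \<Rightarrow> real) \<Rightarrow> nat \<Rightarrow> (nat \<times> nat \<Rightarrow> real) \<Rightarrow> (nat \<Rightarrow> real) measure" where
  "alg_measure \<eta> k v T a =
     PiM {1..T} (\<lambda>t. density lborel (\<lambda>x. ennreal (alg_density \<eta> k v a t x)))"

definition nature_measure :: "nat \<Rightarrow> nat \<Rightarrow> (nat \<Rightarrow> nat \<Rightarrow> real \<Rightarrow> real) \<Rightarrow> (nat \<times> nat \<Rightarrow> real) measure" where
  "nature_measure T k g =
     PiM ({1..T} \<times> {1..<k}) (\<lambda>(t, i). density lborel (\<lambda>x. ennreal (g t i x)))"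

definition regret :: "nat \<Rightarrow> nat \<Rightarrow> (nat \<Rightarrow> nat \<Rightarrow> real) \<Rightarrow> (nat \<times> nat \<Rightarrow> real) \<Rightarrow> (nat \<Rightarrow> real) \<Rightarrow> real" where
  "regret T k v a xs =
     Max ((\<lambda>x. \<Sum>t=1..T. payoff k v a t x) ` {0..<1}) - (\<Sum>t=1..T. payoff k v a t (xs t))"

definition eta :: "nat \<Rightarrow> nat \<Rightarrow> real \<Rightarrow> real" where
  "eta k T \<sigma> = sqrt (ln (real k ^ 2 * real T ^ 3 * \<sigma>) / ((exp 1 - 2) * real T))"

end

theory Submission
  imports Defs
begin

text \<open>Exponential weights on [0,1) are analysed through the potential
  W_t = \<integral>_0^1 exp(\<eta> F_t). Since f_t takes values in [0,1], the bound
  e^y \<le> 1 + y + (e - 2) y^2 on [0,1] gives W_{t+1} \<le> W_t exp(\<eta> m_t + (e - 2) \<eta>^2),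
  where m_t is the algorithm's expected payoff in round t; hence
  W_{T+1} \<le> exp(\<eta> \<Sum>m_t + (e - 2) \<eta>^2 T).
  If nature's draws keep distance \<epsilon> from each other and from 0 and 1, then every x lies in an
  interval of length \<epsilon> on which F_{T+1} is constant, so W_{T+1} \<ge> \<epsilon> exp(\<eta> F_{T+1}(x)), and the
  regret is at most (ln(1/\<epsilon>) + (e - 2) \<eta>^2 T)/\<eta> = 2 sqrt((e - 2) T ln(k^2 T^3 \<sigma>)) for
  \<epsilon> = 1/(k^2 T^3 \<sigma>). As the densities are bounded by \<sigma>, the N = T(k - 1) draws fail to be
  \<epsilon>-separated with probability at most \<sigma> \<epsilon> (N^2 + N) \<le> 1/T, and the regret never exceeds T.\<close>

section \<open>Products of densities\<close>

definition bounded_density :: "real \<Rightarrow> (real \<Rightarrow> real) \<Rightarrow> bool" where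
  "bounded_density \<sigma> h \<longleftrightarrow> h \<in> borel_measurable borel \<and> (\<forall>x. 0 \<le> h x \<and> h x \<le> \<sigma>) \<and>
     (\<forall>x. x \<notin> {0<..<1} \<longrightarrow> h x = 0) \<and> prob_space (density lborel (\<lambda>x. ennreal (h x)))"

abbreviation draws :: "'i set \<Rightarrow> ('i \<Rightarrow> real \<Rightarrow> real) \<Rightarrow> ('i \<Rightarrow> real) measure" where
  "draws I g \<equiv> PiM I (\<lambda>p. density lborel (\<lambda>x. ennreal (g p x)))"

lemma prob_space_draws: "(\<And>p. p \<in> I \<Longrightarrow> bounded_density \<sigma> (g p)) \<Longrightarrow> prob_space (draws I g)"
  by (intro prob_space_PiM) (auto simp: bounded_density_def)

lemma measurable_draw:
  assumes "p \<in> I"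
  shows "(\<lambda>a. a p) \<in> borel_measurable (draws I g)"
proof -
  have "(\<lambda>a. a p) \<in> measurable (draws I g) (density lborel (\<lambda>x. ennreal (g p x)))"
    using assms by (rule measurable_component_singleton)
  moreover have "sets (density lborel (\<lambda>x. ennreal (g p x))) = sets borel" by simp
  ultimately show ?thesis using measurable_cong_sets[OF refl] by blast
qed

lemma emeasure_density_le_length:
  fixes g :: "real \<Rightarrow> real"
  assumes [measurable]: "g \<in> borel_measurable borel" "A \<in> sets borel" "C \<in> sets borel"
    and bounded: "\<And>x. 0 \<le> g x \<and> g x \<le> \<sigma>" and support: "\<And>x. x \<in> A \<Longrightarrow> g x \<noteq> 0 \<Longrightarrow> x \<in> C"
  shows "emeasure (density lborel g) A \<le> ennreal \<sigma> * emeasure lborel C"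
proof -
  have "emeasure (density lborel g) A = (\<integral>\<^sup>+ x. ennreal (g x) * indicator A x \<partial>lborel)"
    by (subst emeasure_density) auto
  also have "\<dots> \<le> (\<integral>\<^sup>+ x. ennreal \<sigma> * indicator C x \<partial>lborel)"
    using bounded support by (intro nn_integral_mono) (force simp: indicator_def ennreal_leI)
  also have "\<dots> = ennreal \<sigma> * emeasure lborel C" by (rule nn_integral_cmult_indicator) simp
  finally show ?thesis .
qed

lemma emeasure_PiM_component:
  assumes "\<And>i. i \<in> I \<Longrightarrow> prob_space (M i)" "p \<in> I" "A \<in> sets (M p)"
  shows "emeasure (PiM I M) {\<omega> \<in> space (PiM I M). \<omega> p \<in> A} = emeasure (M p) A"
proof -
  have "emeasure (PiM I M) {\<omega> \<in> space (PiM I M). \<omega> p \<in> A} = emeasure (distr (PiM I M) (M p) (\<lambda>\<omega>. \<omega> p)) A"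
    using assms by (subst emeasure_distr) (auto intro: measurable_component_singleton simp: Int_def conj_commute)
  then show ?thesis using distr_PiM_component[of I M p, OF assms(1,2)] by simp
qed

lemma distr_PiM_pair:
  assumes prob: "\<And>i. i \<in> I \<Longrightarrow> prob_space (M i)" and "p \<in> I" "q \<in> I" "p \<noteq> q"
  shows "distr (PiM I M) (M p \<Otimes>\<^sub>M M q) (\<lambda>\<omega>. (\<omega> p, \<omega> q)) = M p \<Otimes>\<^sub>M M q"
proof (rule pair_measure_eqI[symmetric])
  interpret Mp: prob_space "M p" using prob \<open>p \<in> I\<close> by blast
  interpret Mq: prob_space "M q" using prob \<open>q \<in> I\<close> by blast
  show "sigma_finite_measure (M p)" "sigma_finite_measure (M q)" by unfold_locales
  show "sets (M p \<Otimes>\<^sub>M M q) = sets (distr (PiM I M) (M p \<Otimes>\<^sub>M M q) (\<lambda>\<omega>. (\<omega> p, \<omega> q)))" by simp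
  fix A B assume A: "A \<in> sets (M p)" and B: "B \<in> sets (M q)"
  define X where "X i = (if i = p then A else B)" for i
  have meas: "(\<lambda>\<omega>. (\<omega> p, \<omega> q)) \<in> measurable (PiM I M) (M p \<Otimes>\<^sub>M M q)"
    using assms by (intro measurable_Pair measurable_component_singleton)
  have "(\<lambda>\<omega>. (\<omega> p, \<omega> q)) -` (A \<times> B) \<inter> space (PiM I M) = prod_emb I M {p, q} (Pi\<^sub>E {p, q} X)"
    using \<open>p \<noteq> q\<close> by (auto simp: prod_emb_def space_PiM PiE_iff X_def)
  then have "emeasure (distr (PiM I M) (M p \<Otimes>\<^sub>M M q) (\<lambda>\<omega>. (\<omega> p, \<omega> q))) (A \<times> B) =
      emeasure (PiM I M) (prod_emb I M {p, q} (Pi\<^sub>E {p, q} X))"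
    using A B by (subst emeasure_distr[OF meas]) auto
  also have "\<dots> = (\<Prod>i\<in>{p, q}. emeasure (M i) (X i))"
    using assms A B by (intro emeasure_PiM_emb prob) (auto simp: X_def)
  also have "\<dots> = emeasure (M p) A * emeasure (M q) B" using \<open>p \<noteq> q\<close> by (simp add: X_def)
  finally show "emeasure (M p) A * emeasure (M q) B =
      emeasure (distr (PiM I M) (M p \<Otimes>\<^sub>M M q) (\<lambda>\<omega>. (\<omega> p, \<omega> q))) (A \<times> B)" ..
qed

lemma integral_PiM_density_component:
  fixes I :: "'i set" and d :: "'i \<Rightarrow> real \<Rightarrow> real" and h :: "real \<Rightarrow> real"
  defines "M \<equiv> draws I d"
  assumes prob: "\<And>i. i \<in> I \<Longrightarrow> prob_space (density lborel (\<lambda>x. ennreal (d i x)))"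
    and i: "i \<in> I" and [measurable]: "d i \<in> borel_measurable borel" "h \<in> borel_measurable borel"
    and nonneg: "\<And>x. 0 \<le> d i x" and int: "integrable lborel (\<lambda>x. d i x * h x)"
  shows "integrable M (\<lambda>\<omega>. h (\<omega> i))" and "(\<integral>\<omega>. h (\<omega> i) \<partial>M) = (\<integral>x. d i x * h x \<partial>lborel)"
proof -
  let ?D = "density lborel (\<lambda>x. ennreal (d i x))"
  have component: "distr M ?D (\<lambda>\<omega>. \<omega> i) = ?D"
    unfolding M_def by (rule distr_PiM_component[OF prob i])
  have meas: "(\<lambda>\<omega>. \<omega> i) \<in> measurable M ?D"
    unfolding M_def using i by (rule measurable_component_singleton)
  have "integrable ?D h" using int nonneg by (subst integrable_density) auto
  then show "integrable M (\<lambda>\<omega>. h (\<omega> i))"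
    using integrable_distr_eq[OF meas, of h] component by simp
  have "(\<integral>\<omega>. h (\<omega> i) \<partial>M) = (\<integral>x. h x \<partial>distr M ?D (\<lambda>\<omega>. \<omega> i))"
    by (rule integral_distr[OF meas, symmetric]) simp
  also have "\<dots> = (\<integral>x. d i x * h x \<partial>lborel)"
    unfolding component using nonneg by (subst integral_density) auto
  finally show "(\<integral>\<omega>. h (\<omega> i) \<partial>M) = (\<integral>x. d i x * h x \<partial>lborel)" .
qed

lemma (in prob_space) integral_le_const_nonneg:
  fixes f :: "'a \<Rightarrow> real"
  assumes "\<And>x. x \<in> space M \<Longrightarrow> f x \<le> c" "0 \<le> c"
  shows "(\<integral>x. f x \<partial>M) \<le> c"
proof (cases "integrable M f")
  case True
  then show ?thesis using assms by (intro integral_le_const AE_I2) auto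
qed (use assms in \<open>simp add: not_integrable_integral_eq\<close>)

lemma (in prob_space) integral_le_off_event:
  fixes f :: "'a \<Rightarrow> real"
  assumes "E \<in> events" "0 \<le> B" "0 \<le> c" and bound: "\<And>x. x \<in> space M \<Longrightarrow> f x \<le> B + c * indicator E x"
  shows "(\<integral>x. f x \<partial>M) \<le> B + c * prob E"
proof (cases "integrable M f")
  case True
  have indicator: "integrable M (\<lambda>x. indicator E x :: real)"
    using \<open>E \<in> events\<close> by (intro integrable_real_indicator) (auto simp: emeasure_eq_measure)
  then have "integrable M (\<lambda>x. B + c * indicator E x)"
    by (rule Bochner_Integration.integrable_add[OF integrable_const integrable_mult_right])
  with True have "(\<integral>x. f x \<partial>M) \<le> (\<integral>x. B + c * indicator E x \<partial>M)"
    using bound by (intro integral_mono) auto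
  also have "\<dots> = B + c * prob E"
    using \<open>E \<in> events\<close> indicator by (subst Bochner_Integration.integral_add) (auto simp: prob_space)
  finally show ?thesis .
qed (use assms in \<open>simp add: not_integrable_integral_eq\<close>)

section \<open>Elementary inequalities\<close>

lemma summable_exp_tail: "summable (\<lambda>n. inverse (fact (n + 2)) * (y::real) ^ (n + 2))"
proof -
  have "summable (\<lambda>n. inverse (fact n) * y ^ n)"
    using summable_exp_generic[of y] by (simp add: scaleR_conv_of_real field_simps)
  then show ?thesis using summable_iff_shift[of "\<lambda>n. inverse (fact n) * y ^ n" 2] by simp
qed

lemma exp_le_quadratic:
  fixes y :: real
  assumes "0 \<le> y" "y \<le> 1"
  shows "exp y \<le> 1 + y + (exp 1 - 2) * y\<^sup>2"
proof -
  have "(\<Sum>n. inverse (fact (n + 2)) * y ^ (n + 2)) \<le> (\<Sum>n. inverse (fact (n + 2)) * 1 ^ (n + 2) * y\<^sup>2)"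
  proof (rule suminf_le)
    fix n
    have "y ^ (n + 2) = y ^ n * y\<^sup>2" by (rule power_add)
    also have "\<dots> \<le> y\<^sup>2" using assms by (intro mult_left_le_one_le power_le_one) auto
    finally have "y ^ (n + 2) \<le> y\<^sup>2" .
    then show "inverse (fact (n + 2)) * y ^ (n + 2) \<le> inverse (fact (n + 2)) * 1 ^ (n + 2) * y\<^sup>2"
      by (simp add: mult_left_mono)
    show "summable (\<lambda>n. inverse (fact (n + 2)) * 1 ^ (n + 2) * y\<^sup>2)"
      using summable_mult2[OF summable_exp_tail[of 1], of "y\<^sup>2"] by simp
  qed (rule summable_exp_tail)
  also have "\<dots> = (exp 1 - 2) * y\<^sup>2"
    using suminf_mult2[OF summable_exp_tail[of 1], of "y\<^sup>2"] exp_first_two_terms[of "1::real"] by simp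
  finally show ?thesis using exp_first_two_terms[of y] by simp
qed

lemma exp_1_minus_2_ge_half: "1 / 2 \<le> exp 1 - (2::real)"
proof -
  have "(\<Sum>n\<in>{0}. inverse (fact (n + 2)) * (1::real) ^ (n + 2)) \<le> (\<Sum>n. inverse (fact (n + 2)) * 1 ^ (n + 2))"
    by (rule sum_le_suminf[OF summable_exp_tail]) auto
  then show ?thesis using exp_first_two_terms[of "1::real"] by (simp add: fact_numeral)
qed

lemma exp_add_le_quadratic:
  fixes \<eta> F f :: real
  assumes "0 \<le> \<eta>" "\<eta> \<le> 1" "0 \<le> f" "f \<le> 1"
  shows "exp (\<eta> * (F + f)) \<le> exp (\<eta> * F) * (1 + \<eta> * f + (exp 1 - 2) * \<eta>\<^sup>2)"
proof -
  have "(\<eta> * f)\<^sup>2 \<le> \<eta>\<^sup>2" using assms by (simp add: power_mult_distrib power_le_one mult_left_le)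
  moreover have "0 \<le> exp 1 - (2::real)" using exp_1_minus_2_ge_half by linarith
  ultimately have "exp (\<eta> * f) \<le> 1 + \<eta> * f + (exp 1 - 2) * \<eta>\<^sup>2"
    using exp_le_quadratic[of "\<eta> * f"] assms by (smt (verit) mult_le_one mult_left_mono mult_nonneg_nonneg)
  then have "exp (\<eta> * F) * exp (\<eta> * f) \<le> exp (\<eta> * F) * (1 + \<eta> * f + (exp 1 - 2) * \<eta>\<^sup>2)"
    by (rule mult_left_mono) simp
  then show ?thesis by (simp add: distrib_left exp_add)
qed

lemma integrable_indicator_unit_bounded:
  fixes G :: "real \<Rightarrow> real"
  assumes [measurable]: "G \<in> borel_measurable borel"
    and bounded: "\<And>x. 0 \<le> x \<Longrightarrow> x < 1 \<Longrightarrow> \<bar>G x\<bar> \<le> C"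
  shows "integrable lborel (\<lambda>x. indicator {0..<1} x * G x)"
proof (rule Bochner_Integration.integrable_bound)
  have "emeasure lborel {0..<1::real} = 1" by simp
  then show "integrable lborel (\<lambda>x::real. indicator {0..<1} x * C)"
    by (intro integrable_mult_left integrable_real_indicator) auto
  show "AE x in lborel. norm (indicator {0..<1} x * G x) \<le> norm (indicator {0..<1} x * C)"
    using bounded bounded[of 0] by (intro AE_I2) (force simp: indicator_def)
qed measurable

lemma learning_rate_tuned:
  fixes c L T \<eta> :: real
  assumes "0 < c" "0 < T" "0 < \<eta>" and \<eta>: "\<eta> = sqrt (L / (c * T))"
  shows "(L + c * \<eta>\<^sup>2 * T) / \<eta> = 2 * sqrt (c * L * T)"
proof -
  have "0 < L"
    using assms divide_nonpos_pos[of L "c * T"] by (cases "L \<le> 0") auto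
  then have "c * \<eta>\<^sup>2 * T = L" using assms by simp
  moreover have "sqrt (c * L * T) * \<eta> = L"
    using \<open>0 < L\<close> assms by (simp add: real_sqrt_mult[symmetric] power2_eq_square)
  ultimately show ?thesis using \<open>0 < \<eta>\<close> by (simp add: field_simps)
qed

section \<open>Payoff functions\<close>

lemma payoff_index_in_range:
  assumes "1 \<le> k" "0 \<le> x" "x < 1"
  shows "(LEAST i. x < pts k a t i) \<in> {1..k}"
proof -
  have below_last: "x < pts k a t k" using assms by (simp add: pts_def)
  have "x < pts k a t (LEAST i. x < pts k a t i)" using below_last by (rule LeastI)
  moreover have "pts k a t 0 = 0" by (simp add: pts_def)
  ultimately have "(LEAST i. x < pts k a t i) \<noteq> 0" using assms by (metis not_less)
  moreover have "(LEAST i. x < pts k a t i) \<le> k" using below_last by (rule Least_le)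
  ultimately show ?thesis by auto
qed

lemma payoff_eq_if_same_draws_below:
  assumes "0 \<le> x" "x < 1" "0 \<le> y" "y < 1"
    and same: "\<And>j. j \<in> {1..<k} \<Longrightarrow> a (t, j) \<le> x \<longleftrightarrow> a (t, j) \<le> y"
  shows "payoff k v a t x = payoff k v a t y"
proof -
  have "x < pts k a t i \<longleftrightarrow> y < pts k a t i" for i
  proof (cases "i = 0 \<or> k \<le> i")
    case True
    then show ?thesis using assms by (auto simp: pts_def)
  next
    case False
    let ?sorted = "sort (map (\<lambda>j. a (t, j)) [1..<k])"
    have "?sorted ! (i - 1) \<in> set ?sorted" using False by (intro nth_mem) auto
    then obtain j where j: "j \<in> {1..<k}" "?sorted ! (i - 1) = a (t, j)" by auto
    then have "pts k a t i = a (t, j)" using False by (simp add: pts_def)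
    then show ?thesis using same[OF j(1)] by auto
  qed
  then show ?thesis unfolding payoff_def by simp
qed

lemma borel_measurable_payoff [measurable]: "payoff k v a t \<in> borel_measurable borel"
  unfolding payoff_def by measurable

lemma borel_measurable_cum [measurable]: "cum k v a t \<in> borel_measurable borel"
  unfolding cum_def by measurable

lemma cum_Suc: "1 \<le> t \<Longrightarrow> cum k v a (Suc t) x = cum k v a t x + payoff k v a t x"
  unfolding cum_def by (simp add: atLeastLessThanSuc)

lemma cum_Suc_eq_total_payoff: "cum k v a (Suc T) x = (\<Sum>t=1..T. payoff k v a t x)"
  unfolding cum_def by (intro sum.cong) auto

text \<open>The total payoff x \<mapsto> \<Sum>t. f_t(x) only takes the values \<Sum>t. v t (h t) with h t \<in> {1..k}.\<close>
lemma finite_total_payoffs: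
  assumes "1 \<le> k"
  shows "finite ((\<lambda>x. \<Sum>t=1..T. payoff k v a t x) ` {0..<1})"
proof (rule finite_subset)
  show "finite ((\<lambda>h. \<Sum>t=1..T. v t (h t)) ` ({1..T} \<rightarrow>\<^sub>E {1..k}))"
    by (intro finite_imageI finite_PiE) auto
  show "(\<lambda>x. \<Sum>t=1..T. payoff k v a t x) ` {0..<1} \<subseteq> (\<lambda>h. \<Sum>t=1..T. v t (h t)) ` ({1..T} \<rightarrow>\<^sub>E {1..k})"
  proof
    fix z assume "z \<in> (\<lambda>x. \<Sum>t=1..T. payoff k v a t x) ` {0..<1}"
    then obtain x where x: "0 \<le> x" "x < 1" "z = (\<Sum>t=1..T. payoff k v a t x)" by auto
    let ?h = "\<lambda>t\<in>{1..T}. LEAST i. x < pts k a t i"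
    have "?h \<in> {1..T} \<rightarrow>\<^sub>E {1..k}" using payoff_index_in_range[OF assms x(1,2)] by auto
    moreover have "z = (\<Sum>t=1..T. v t (?h t))" unfolding x payoff_def by (intro sum.cong) auto
    ultimately show "z \<in> (\<lambda>h. \<Sum>t=1..T. v t (h t)) ` ({1..T} \<rightarrow>\<^sub>E {1..k})" by blast
  qed
qed

context
  fixes T k :: nat and v :: "nat \<Rightarrow> nat \<Rightarrow> real" and a :: "nat \<times> nat \<Rightarrow> real"
  assumes k: "1 \<le> k" and vals: "\<forall>t\<in>{1..T}. \<forall>i\<in>{1..k}. 0 \<le> v t i \<and> v t i \<le> 1"
begin

lemma payoff_bounds:
  assumes "t \<in> {1..T}" "0 \<le> x" "x < 1"
  shows "0 \<le> payoff k v a t x \<and> payoff k v a t x \<le> 1"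
  using payoff_index_in_range[OF k assms(2,3), of a t] vals assms(1) unfolding payoff_def by blast

lemma cum_bounds:
  assumes "t \<le> Suc T" "0 \<le> x" "x < 1"
  shows "0 \<le> cum k v a t x \<and> cum k v a t x \<le> T"
proof -
  have "cum k v a t x \<le> (\<Sum>s\<in>{1..<t}. 1)"
    unfolding cum_def using payoff_bounds assms by (intro sum_mono) auto
  also have "\<dots> \<le> T" using assms by simp
  finally show ?thesis unfolding cum_def using payoff_bounds assms by (auto intro: sum_nonneg)
qed

lemma total_payoff_le: "x \<in> {0..<1} \<Longrightarrow> (\<Sum>t=1..T. payoff k v a t x) \<le> T"
  using cum_bounds[of "Suc T" x] by (simp add: cum_Suc_eq_total_payoff)

end

definition separated :: "'i set \<Rightarrow> real \<Rightarrow> ('i \<Rightarrow> real) \<Rightarrow> bool" where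
  "separated I \<epsilon> a \<longleftrightarrow> (\<forall>p\<in>I. \<epsilon> \<le> a p \<and> a p \<le> 1 - \<epsilon>) \<and>
     (\<forall>p\<in>I. \<forall>q\<in>I. p \<noteq> q \<longrightarrow> \<not> (a p \<le> a q \<and> a q < a p + \<epsilon>))"

text \<open>Take c to be the largest point a p below x (or 0 if there is none); separation keeps
  every other point out of [c, c + \<epsilon>).\<close>
lemma separated_cell:
  assumes sep: "separated I \<epsilon> a" and "finite I" "0 < \<epsilon>" "\<epsilon> \<le> 1" "0 \<le> x" "x < 1"
  obtains c where "0 \<le> c" "c + \<epsilon> \<le> 1" "\<And>y p. c \<le> y \<Longrightarrow> y < c + \<epsilon> \<Longrightarrow> p \<in> I \<Longrightarrow> a p \<le> y \<longleftrightarrow> a p \<le> x"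
proof (cases "\<exists>p\<in>I. a p \<le> x")
  case False
  have "\<epsilon> \<le> a p" if "p \<in> I" for p using sep that unfolding separated_def by blast
  then show ?thesis using False assms by (intro that[of 0]) force+
next
  case True
  define P where "P = {p\<in>I. a p \<le> x}"
  have "finite P" "P \<noteq> {}" unfolding P_def using True \<open>finite I\<close> by auto
  then obtain p0 where p0: "p0 \<in> P" "a p0 = Max (a ` P)" by (metis (no_types, lifting) Max_in finite_imageI image_iff image_is_empty)
  have below_p0: "a q \<le> a p0" if "q \<in> P" for q using that p0 \<open>finite P\<close> by simp
  have p0I: "p0 \<in> I" "a p0 \<le> x" using p0 unfolding P_def by auto
  have "\<epsilon> \<le> a p0 \<and> a p0 \<le> 1 - \<epsilon>" using sep p0I unfolding separated_def by blast
  moreover have "a q \<le> y \<longleftrightarrow> a q \<le> x" if y: "a p0 \<le> y" "y < a p0 + \<epsilon>" and q: "q \<in> I" for y q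
  proof
    assume "a q \<le> x"
    then show "a q \<le> y" using below_p0[of q] q y unfolding P_def by auto
  next
    assume qy: "a q \<le> y"
    have "q = p0 \<or> \<not> (a p0 \<le> a q \<and> a q < a p0 + \<epsilon>)" using sep p0I(1) q unfolding separated_def by auto
    then show "a q \<le> x" using qy y p0I by auto
  qed
  ultimately show ?thesis using \<open>0 < \<epsilon>\<close> by (intro that[of "a p0"]) auto
qed

lemma total_payoff_constant_near:
  assumes sep: "separated ({1..T} \<times> {1..<k}) \<epsilon> a" and "0 < \<epsilon>" "\<epsilon> \<le> 1" and x: "0 \<le> x" "x < 1"
  obtains c where "0 \<le> c" "c + \<epsilon> \<le> 1"
    "\<And>y. c \<le> y \<Longrightarrow> y < c + \<epsilon> \<Longrightarrow> cum k v a (Suc T) y = cum k v a (Suc T) x"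
proof -
  obtain c where c: "0 \<le> c" "c + \<epsilon> \<le> 1"
    and same: "\<And>y p. c \<le> y \<Longrightarrow> y < c + \<epsilon> \<Longrightarrow> p \<in> {1..T} \<times> {1..<k} \<Longrightarrow> a p \<le> y \<longleftrightarrow> a p \<le> x"
    using separated_cell[OF sep _ assms(2-5)] by auto
  have "cum k v a (Suc T) y = cum k v a (Suc T) x" if y: "c \<le> y" "y < c + \<epsilon>" for y
    unfolding cum_Suc_eq_total_payoff
  proof (intro sum.cong refl payoff_eq_if_same_draws_below)
    show "0 \<le> y" "y < 1" using y c by linarith+
    fix t j assume "t \<in> {1..T}" "j \<in> {1..<k}"
    then show "a (t, j) \<le> y \<longleftrightarrow> a (t, j) \<le> x" using same[OF y] by blast
  qed (use x in auto)
  with c show ?thesis by (rule that)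
qed

section \<open>Exponential weights\<close>

definition potential :: "real \<Rightarrow> nat \<Rightarrow> (nat \<Rightarrow> nat \<Rightarrow> real) \<Rightarrow> (nat \<times> nat \<Rightarrow> real) \<Rightarrow> nat \<Rightarrow> real" where
  "potential \<eta> k v a t = (\<integral>x. indicator {0..<1} x * exp (\<eta> * cum k v a t x) \<partial>lborel)"

definition expected_payoff :: "real \<Rightarrow> nat \<Rightarrow> (nat \<Rightarrow> nat \<Rightarrow> real) \<Rightarrow> (nat \<times> nat \<Rightarrow> real) \<Rightarrow> nat \<Rightarrow> real" where
  "expected_payoff \<eta> k v a t = (\<integral>x. alg_density \<eta> k v a t x * payoff k v a t x \<partial>lborel)"

lemma alg_density_eq_potential:
  "alg_density \<eta> k v a t x = indicator {0..<1} x * exp (\<eta> * cum k v a t x) / potential \<eta> k v a t"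
  by (simp add: alg_density_def potential_def)

lemma borel_measurable_alg_density [measurable]: "alg_density \<eta> k v a t \<in> borel_measurable borel"
  unfolding alg_density_def by measurable

lemma potential_1: "potential \<eta> k v a 1 = 1"
  by (simp add: potential_def cum_def)

context
  fixes T k :: nat and v :: "nat \<Rightarrow> nat \<Rightarrow> real" and a :: "nat \<times> nat \<Rightarrow> real" and \<eta> :: real
  assumes k: "1 \<le> k" and vals: "\<forall>t\<in>{1..T}. \<forall>i\<in>{1..k}. 0 \<le> v t i \<and> v t i \<le> 1"
    and eta_nonneg: "0 \<le> \<eta>"
begin

lemma exp_cum_bounds:
  assumes "t \<le> Suc T" "0 \<le> x" "x < 1"
  shows "1 \<le> exp (\<eta> * cum k v a t x) \<and> exp (\<eta> * cum k v a t x) \<le> exp (\<eta> * T)"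
  using cum_bounds[OF k vals assms] eta_nonneg by (auto intro: mult_left_mono)

lemma integrable_exp_cum:
  "t \<le> Suc T \<Longrightarrow> integrable lborel (\<lambda>x. indicator {0..<1} x * exp (\<eta> * cum k v a t x))"
  using exp_cum_bounds by (intro integrable_indicator_unit_bounded[where C = "exp (\<eta> * T)"]) auto

lemma integrable_exp_cum_payoff:
  assumes "t \<in> {1..T}"
  shows "integrable lborel (\<lambda>x. indicator {0..<1} x * (exp (\<eta> * cum k v a t x) * payoff k v a t x))"
proof (rule integrable_indicator_unit_bounded[where C = "exp (\<eta> * T)"])
  fix x :: real assume x: "0 \<le> x" "x < 1"
  have "exp (\<eta> * cum k v a t x) * payoff k v a t x \<le> exp (\<eta> * cum k v a t x)"
    using payoff_bounds[OF k vals assms x] by (intro mult_left_le) auto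
  also have "\<dots> \<le> exp (\<eta> * T)" using exp_cum_bounds assms x by auto
  finally show "\<bar>exp (\<eta> * cum k v a t x) * payoff k v a t x\<bar> \<le> exp (\<eta> * T)"
    using payoff_bounds[OF k vals assms x] by simp
qed measurable

lemma one_le_potential: "t \<le> Suc T \<Longrightarrow> 1 \<le> potential \<eta> k v a t"
proof -
  assume t: "t \<le> Suc T"
  have "(\<integral>x. indicator {0..<1::real} x * 1 \<partial>lborel) \<le> potential \<eta> k v a t"
    unfolding potential_def
  proof (rule integral_mono[OF _ integrable_exp_cum[OF t]])
    show "integrable lborel (\<lambda>x. indicator {0..<1::real} x * 1 :: real)"
      by (rule integrable_indicator_unit_bounded[where C = 1]) auto
  qed (use exp_cum_bounds[OF t] in \<open>auto simp: indicator_def\<close>)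
  then show ?thesis by simp
qed

lemma integral_exp_cum_payoff:
  assumes "t \<in> {1..T}"
  shows "(\<integral>x. indicator {0..<1} x * (exp (\<eta> * cum k v a t x) * payoff k v a t x) \<partial>lborel)
    = potential \<eta> k v a t * expected_payoff \<eta> k v a t"
proof -
  have "expected_payoff \<eta> k v a t = (\<integral>x. indicator {0..<1} x * (exp (\<eta> * cum k v a t x) * payoff k v a t x) \<partial>lborel)
      / potential \<eta> k v a t"
    unfolding expected_payoff_def alg_density_eq_potential by (simp add: mult.assoc)
  then show ?thesis using one_le_potential[of t] assms by simp
qed

text \<open>Integrate e^{\<eta>(F_t + f_t)} \<le> e^{\<eta> F_t}(1 + \<eta> f_t + (e - 2)\<eta>^2) over [0,1);
  the middle term gives W_t m_t because e^{\<eta> F_t}/W_t is the density p_t.\<close>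
lemma potential_Suc_le:
  assumes t: "t \<in> {1..T}" and "\<eta> \<le> 1"
  shows "potential \<eta> k v a (Suc t) \<le> potential \<eta> k v a t * exp (\<eta> * expected_payoff \<eta> k v a t + (exp 1 - 2) * \<eta>\<^sup>2)"
proof -
  let ?w = "\<lambda>x. indicator {0..<1} x * exp (\<eta> * cum k v a t x)"
  let ?wf = "\<lambda>x. indicator {0..<1} x * (exp (\<eta> * cum k v a t x) * payoff k v a t x)"
  let ?W = "potential \<eta> k v a t" and ?m = "expected_payoff \<eta> k v a t"
  have pointwise: "indicator {0..<1} x * exp (\<eta> * cum k v a (Suc t) x) \<le> ?w x + \<eta> * ?wf x + (exp 1 - 2) * \<eta>\<^sup>2 * ?w x"
    for x :: real
    using exp_add_le_quadratic[OF eta_nonneg \<open>\<eta> \<le> 1\<close>, of "payoff k v a t x" "cum k v a t x"]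
      payoff_bounds[OF k vals t, of x] t
    by (auto simp: indicator_def cum_Suc algebra_simps)
  have "potential \<eta> k v a (Suc t) \<le> (\<integral>x. ?w x + \<eta> * ?wf x + (exp 1 - 2) * \<eta>\<^sup>2 * ?w x \<partial>lborel)"
    unfolding potential_def using t
    by (intro integral_mono pointwise integrable_exp_cum Bochner_Integration.integrable_add
        integrable_mult_right integrable_exp_cum_payoff) auto
  also have "\<dots> = ?W + \<eta> * (?W * ?m) + (exp 1 - 2) * \<eta>\<^sup>2 * ?W"
    unfolding integral_exp_cum_payoff[OF t, symmetric] unfolding potential_def using t
    by (subst Bochner_Integration.integral_add;
        (intro Bochner_Integration.integrable_add integrable_mult_right integrable_exp_cum integrable_exp_cum_payoff)?;
        simp?)+
  also have "\<dots> = ?W * (1 + (\<eta> * ?m + (exp 1 - 2) * \<eta>\<^sup>2))" by (simp add: algebra_simps)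
  also have "\<dots> \<le> ?W * exp (\<eta> * ?m + (exp 1 - 2) * \<eta>\<^sup>2)"
    using one_le_potential[of t] t by (intro mult_left_mono exp_ge_add_one_self) auto
  finally show ?thesis .
qed

lemma potential_Suc_le_exp_sum:
  assumes "\<eta> \<le> 1" "n \<le> T"
  shows "potential \<eta> k v a (Suc n) \<le> exp (\<eta> * (\<Sum>t=1..n. expected_payoff \<eta> k v a t) + (exp 1 - 2) * \<eta>\<^sup>2 * n)"
  using \<open>n \<le> T\<close>
proof (induction n)
  case 0
  then show ?case using potential_1[of \<eta> k v a] by simp
next
  case (Suc n)
  let ?c = "(exp 1 - 2) * \<eta>\<^sup>2"
  have "potential \<eta> k v a (Suc (Suc n)) \<le> potential \<eta> k v a (Suc n) * exp (\<eta> * expected_payoff \<eta> k v a (Suc n) + ?c)"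
    using potential_Suc_le[of "Suc n"] Suc.prems \<open>\<eta> \<le> 1\<close> by auto
  also have "\<dots> \<le> exp (\<eta> * (\<Sum>t=1..n. expected_payoff \<eta> k v a t) + ?c * n) * exp (\<eta> * expected_payoff \<eta> k v a (Suc n) + ?c)"
    using Suc by (intro mult_right_mono) auto
  also have "\<dots> = exp (\<eta> * (\<Sum>t=1..Suc n. expected_payoff \<eta> k v a t) + ?c * Suc n)"
    by (simp add: exp_add[symmetric] algebra_simps)
  finally show ?case .
qed

lemma potential_ge_interval:
  assumes "0 \<le> c" "0 < \<epsilon>" "c + \<epsilon> \<le> 1"
    and const: "\<And>y. c \<le> y \<Longrightarrow> y < c + \<epsilon> \<Longrightarrow> cum k v a (Suc T) y = F"
  shows "\<epsilon> * exp (\<eta> * F) \<le> potential \<eta> k v a (Suc T)"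
proof -
  have "emeasure lborel {c..<c + \<epsilon>} = ennreal \<epsilon>" using assms by simp
  then have "integrable lborel (\<lambda>y. indicator {c..<c + \<epsilon>} y * exp (\<eta> * F))"
    by (intro integrable_mult_left integrable_real_indicator) auto
  then have "(\<integral>y. indicator {c..<c + \<epsilon>} y * exp (\<eta> * F) \<partial>lborel) \<le> potential \<eta> k v a (Suc T)"
    unfolding potential_def using const assms
    by (intro integral_mono integrable_exp_cum) (auto simp: indicator_def)
  then show ?thesis using assms by simp
qed

lemma alg_density_nonneg: "t \<le> Suc T \<Longrightarrow> 0 \<le> alg_density \<eta> k v a t x"
  unfolding alg_density_eq_potential using one_le_potential[of t]
  by (auto simp: indicator_def)

lemma prob_space_alg_density:
  assumes t: "t \<le> Suc T"
  shows "prob_space (density lborel (\<lambda>x. ennreal (alg_density \<eta> k v a t x)))"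
proof (rule prob_spaceI)
  have "(\<integral>x. alg_density \<eta> k v a t x \<partial>lborel) = 1"
    unfolding alg_density_eq_potential using one_le_potential[OF t]
    by (simp add: potential_def)
  moreover have "integrable lborel (alg_density \<eta> k v a t)"
    unfolding alg_density_eq_potential using integrable_exp_cum[OF t] by simp
  ultimately have "(\<integral>\<^sup>+ x. ennreal (alg_density \<eta> k v a t x) \<partial>lborel) = 1"
    using alg_density_nonneg[OF t] by (subst nn_integral_eq_integral) auto
  then show "emeasure (density lborel (\<lambda>x. ennreal (alg_density \<eta> k v a t x)))
      (space (density lborel (\<lambda>x. ennreal (alg_density \<eta> k v a t x)))) = 1"
    by (simp add: emeasure_density)
qed

lemma prob_space_alg_measure: "prob_space (alg_measure \<eta> k v T a)"
  unfolding alg_measure_def by (intro prob_space_PiM prob_space_alg_density) auto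

lemma expected_payoff_nonneg:
  assumes t: "t \<in> {1..T}"
  shows "0 \<le> expected_payoff \<eta> k v a t"
  unfolding expected_payoff_def
proof (intro integral_nonneg_AE AE_I2)
  fix x :: real
  show "0 \<le> alg_density \<eta> k v a t x * payoff k v a t x"
  proof (cases "0 \<le> x \<and> x < 1")
    case True
    then show ?thesis using alg_density_nonneg[of t] payoff_bounds[OF k vals t] t by simp
  qed (simp add: alg_density_eq_potential)
qed

lemma expected_regret_eq:
  "(\<integral>xs. regret T k v a xs \<partial>alg_measure \<eta> k v T a) =
     Max ((\<lambda>x. \<Sum>t=1..T. payoff k v a t x) ` {0..<1}) - (\<Sum>t=1..T. expected_payoff \<eta> k v a t)"
proof -
  interpret prob_space "alg_measure \<eta> k v T a" by (rule prob_space_alg_measure)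
  have "integrable (alg_measure \<eta> k v T a) (\<lambda>xs. payoff k v a t (xs t))
    \<and> (\<integral>xs. payoff k v a t (xs t) \<partial>alg_measure \<eta> k v T a) = expected_payoff \<eta> k v a t"
    if t: "t \<in> {1..T}" for t
  proof -
    have "integrable lborel (\<lambda>x. alg_density \<eta> k v a t x * payoff k v a t x)"
      using integrable_exp_cum_payoff[OF t]
      by (simp add: alg_density_eq_potential mult.assoc)
    note component = integral_PiM_density_component[where I = "{1..T}" and d = "alg_density \<eta> k v a",
        OF prob_space_alg_density t _ _ alg_density_nonneg this]
    show ?thesis
      using component t unfolding alg_measure_def expected_payoff_def by simp
  qed
  then show ?thesis unfolding regret_def
    by (subst Bochner_Integration.integral_diff)
       (auto simp: prob_space Bochner_Integration.integral_sum intro!: Bochner_Integration.integrable_sum)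
qed

lemma expected_regret_le_T: "(\<integral>xs. regret T k v a xs \<partial>alg_measure \<eta> k v T a) \<le> T"
proof -
  have "Max ((\<lambda>x. \<Sum>t=1..T. payoff k v a t x) ` {0..<1}) \<le> T"
    using finite_total_payoffs[OF k] total_payoff_le[OF k vals] by (subst Max_le_iff) auto
  moreover have "0 \<le> (\<Sum>t=1..T. expected_payoff \<eta> k v a t)"
    using expected_payoff_nonneg by (intro sum_nonneg) auto
  ultimately show ?thesis unfolding expected_regret_eq by linarith
qed

lemma expected_regret_le_separated:
  assumes sep: "separated ({1..T} \<times> {1..<k}) \<epsilon> a" and "0 < \<epsilon>" "\<epsilon> \<le> 1" and "0 < \<eta>" "\<eta> \<le> 1"
  shows "(\<integral>xs. regret T k v a xs \<partial>alg_measure \<eta> k v T a) \<le> (ln (1 / \<epsilon>) + (exp 1 - 2) * \<eta>\<^sup>2 * T) / \<eta>"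
proof -
  let ?m = "\<Sum>t=1..T. expected_payoff \<eta> k v a t"
  have "(\<Sum>t=1..T. payoff k v a t x) \<le> ?m + (ln (1 / \<epsilon>) + (exp 1 - 2) * \<eta>\<^sup>2 * T) / \<eta>"
    if x: "0 \<le> x" "x < 1" for x
  proof -
    let ?F = "cum k v a (Suc T) x"
    obtain c where "0 \<le> c" "c + \<epsilon> \<le> 1" "\<And>y. c \<le> y \<Longrightarrow> y < c + \<epsilon> \<Longrightarrow> cum k v a (Suc T) y = ?F"
      using total_payoff_constant_near[OF sep assms(2,3) x] by blast
    then have "\<epsilon> * exp (\<eta> * ?F) \<le> potential \<eta> k v a (Suc T)"
      using \<open>0 < \<epsilon>\<close> by (intro potential_ge_interval)
    also have "\<dots> \<le> exp (\<eta> * ?m + (exp 1 - 2) * \<eta>\<^sup>2 * T)"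
      using potential_Suc_le_exp_sum[OF \<open>\<eta> \<le> 1\<close>] by simp
    finally have "ln (\<epsilon> * exp (\<eta> * ?F)) \<le> \<eta> * ?m + (exp 1 - 2) * \<eta>\<^sup>2 * T"
      using \<open>0 < \<epsilon>\<close> by (subst (asm) ln_le_cancel_iff[symmetric]) auto
    then have "(?F - ?m) * \<eta> \<le> ln (1 / \<epsilon>) + (exp 1 - 2) * \<eta>\<^sup>2 * T"
      using \<open>0 < \<epsilon>\<close> by (simp add: ln_mult ln_div algebra_simps)
    then have "?F - ?m \<le> (ln (1 / \<epsilon>) + (exp 1 - 2) * \<eta>\<^sup>2 * T) / \<eta>"
      using \<open>0 < \<eta>\<close> by (simp add: pos_le_divide_eq)
    then show ?thesis by (simp add: cum_Suc_eq_total_payoff)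
  qed
  then have "Max ((\<lambda>x. \<Sum>t=1..T. payoff k v a t x) ` {0..<1}) \<le> ?m + (ln (1 / \<epsilon>) + (exp 1 - 2) * \<eta>\<^sup>2 * T) / \<eta>"
    using finite_total_payoffs[OF k] by (subst Max_le_iff) auto
  then show ?thesis unfolding expected_regret_eq by linarith
qed

end

section \<open>Separation of nature's draws\<close>

definition close_pairs :: "real \<Rightarrow> (real \<times> real) set" where
  "close_pairs \<epsilon> = {z. fst z \<le> snd z \<and> snd z < fst z + \<epsilon>}"

lemma sets_close_pairs: "close_pairs \<epsilon> \<in> sets (borel \<Otimes>\<^sub>M borel)"
proof -
  have "{z \<in> space (borel \<Otimes>\<^sub>M borel). fst z \<le> snd z \<and> snd z < fst z + \<epsilon>} \<in> sets (borel \<Otimes>\<^sub>M borel)"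
    by measurable
  then show ?thesis by (simp add: close_pairs_def space_pair_measure)
qed

lemma not_separated_eq:
  "{a \<in> S. \<not> separated I \<epsilon> a} =
     (\<Union>p\<in>I. {a \<in> S. \<not> (\<epsilon> \<le> a p \<and> a p \<le> 1 - \<epsilon>)}) \<union> (\<Union>p\<in>I. \<Union>q\<in>I - {p}. {a \<in> S. (a p, a q) \<in> close_pairs \<epsilon>})"
  (is "?L = ?R")
proof (intro set_eqI iffI)
  show "a \<in> ?R" if "a \<in> ?L" for a using that unfolding separated_def close_pairs_def by auto
  show "a \<in> ?L" if "a \<in> ?R" for a using that unfolding separated_def close_pairs_def by force
qed

context
  fixes I :: "'i set" and g :: "'i \<Rightarrow> real \<Rightarrow> real" and \<sigma> \<epsilon> :: real
  assumes finite_I: "finite I" and eps: "0 < \<epsilon>" and sigma: "0 \<le> \<sigma>"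
    and dens: "\<And>p. p \<in> I \<Longrightarrow> bounded_density \<sigma> (g p)"
begin

lemma prob_draw_near_boundary:
  assumes p: "p \<in> I"
  shows "measure (draws I g) {a \<in> space (draws I g). \<not> (\<epsilon> \<le> a p \<and> a p \<le> 1 - \<epsilon>)} \<le> 2 * \<sigma> * \<epsilon>"
proof -
  interpret P: prob_space "draws I g" by (rule prob_space_draws[OF dens])
  let ?C = "{x. \<not> (\<epsilon> \<le> x \<and> x \<le> 1 - \<epsilon>)}"
  note g = dens[OF p, unfolded bounded_density_def]
  have support: "0 < x \<and> x < 1" if "g p x \<noteq> 0" for x using g that by force
  have "emeasure (draws I g) {a \<in> space (draws I g). a p \<in> ?C} = emeasure (density lborel (\<lambda>x. ennreal (g p x))) ?C"
    using dens p by (intro emeasure_PiM_component) (auto simp: bounded_density_def)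
  also have "\<dots> \<le> ennreal \<sigma> * emeasure lborel ({0..\<epsilon>} \<union> {1 - \<epsilon>..1})"
    using g by (intro emeasure_density_le_length) (auto simp: not_le dest!: support)
  also have "\<dots> \<le> ennreal \<sigma> * (ennreal \<epsilon> + ennreal \<epsilon>)"
    using eps emeasure_subadditive[of "{0..\<epsilon>}" lborel "{1 - \<epsilon>..1}"] by (intro mult_left_mono) auto
  also have "\<dots> = ennreal (2 * \<sigma> * \<epsilon>)"
    using eps sigma by (simp add: ennreal_plus[symmetric] ennreal_mult[symmetric] del: ennreal_plus)
  finally show ?thesis using eps sigma by (simp add: P.emeasure_eq_measure)
qed

text \<open>By independence the pair (a p, a q) has the product law; integrating over a p, the
  conditional probability that a q \<in> [a p, a p + \<epsilon>) is at most \<sigma> \<epsilon>.\<close>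
lemma prob_draws_close:
  assumes p: "p \<in> I" and q: "q \<in> I" and "p \<noteq> q"
  shows "measure (draws I g) {a \<in> space (draws I g). (a p, a q) \<in> close_pairs \<epsilon>} \<le> \<sigma> * \<epsilon>"
proof -
  interpret P: prob_space "draws I g" by (rule prob_space_draws[OF dens])
  let ?D = "\<lambda>p. density lborel (\<lambda>x. ennreal (g p x))"
  interpret Dp: prob_space "?D p" using dens p by (simp add: bounded_density_def)
  interpret Dq: prob_space "?D q" using dens q by (simp add: bounded_density_def)
  have S: "close_pairs \<epsilon> \<in> sets (?D p \<Otimes>\<^sub>M ?D q)" using sets_close_pairs by (simp cong: sets_pair_measure_cong)
  have pair: "(\<lambda>a. (a p, a q)) \<in> measurable (draws I g) (?D p \<Otimes>\<^sub>M ?D q)"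
    using p q by (intro measurable_Pair measurable_component_singleton)
  have "emeasure (draws I g) {a \<in> space (draws I g). (a p, a q) \<in> close_pairs \<epsilon>}
      = emeasure (distr (draws I g) (?D p \<Otimes>\<^sub>M ?D q) (\<lambda>a. (a p, a q))) (close_pairs \<epsilon>)"
    using S by (subst emeasure_distr[OF pair]) (auto simp: Int_def conj_commute)
  also have "\<dots> = emeasure (?D p \<Otimes>\<^sub>M ?D q) (close_pairs \<epsilon>)"
    using dens p q \<open>p \<noteq> q\<close> by (subst distr_PiM_pair) (auto simp: bounded_density_def)
  also have "\<dots> = (\<integral>\<^sup>+x. emeasure (?D q) (Pair x -` close_pairs \<epsilon>) \<partial>?D p)"
    by (rule Dq.emeasure_pair_measure_alt[OF S])
  also have "\<dots> \<le> (\<integral>\<^sup>+x. ennreal (\<sigma> * \<epsilon>) \<partial>?D p)"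
  proof (rule nn_integral_mono)
    fix x
    have "Pair x -` close_pairs \<epsilon> = {x..<x + \<epsilon>}" by (auto simp: close_pairs_def)
    then have "emeasure (?D q) (Pair x -` close_pairs \<epsilon>) \<le> ennreal \<sigma> * emeasure lborel {x..<x + \<epsilon>}"
      using dens[OF q] by (intro emeasure_density_le_length) (auto simp: bounded_density_def)
    then show "emeasure (?D q) (Pair x -` close_pairs \<epsilon>) \<le> ennreal (\<sigma> * \<epsilon>)"
      using eps sigma by (simp add: ennreal_mult)
  qed
  also have "\<dots> = ennreal (\<sigma> * \<epsilon>)" using Dp.emeasure_space_1 by simp
  finally show ?thesis using eps sigma by (simp add: P.emeasure_eq_measure)
qed

lemma prob_not_separated:
  shows "{a \<in> space (draws I g). \<not> separated I \<epsilon> a} \<in> sets (draws I g)"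
    and "measure (draws I g) {a \<in> space (draws I g). \<not> separated I \<epsilon> a} \<le> \<sigma> * \<epsilon> * ((real (card I))\<^sup>2 + real (card I))"
proof -
  interpret P: prob_space "draws I g" by (rule prob_space_draws[OF dens])
  define B where "B p = {a \<in> space (draws I g). \<not> (\<epsilon> \<le> a p \<and> a p \<le> 1 - \<epsilon>)}" for p
  define C where "C p q = {a \<in> space (draws I g). (a p, a q) \<in> close_pairs \<epsilon>}" for p q
  have B_sets: "B p \<in> sets (draws I g)" if "p \<in> I" for p
  proof -
    note [measurable] = measurable_draw[OF that]
    show ?thesis unfolding B_def by measurable
  qed
  have C_sets: "C p q \<in> sets (draws I g)" if "p \<in> I" "q \<in> I" for p q
  proof -
    have "(\<lambda>a. (a p, a q)) \<in> measurable (draws I g) (borel \<Otimes>\<^sub>M borel)"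
      using that by (intro measurable_Pair measurable_draw)
    note preimage = measurable_sets[OF this sets_close_pairs]
    have "C p q = (\<lambda>a. (a p, a q)) -` close_pairs \<epsilon> \<inter> space (draws I g)"
      unfolding C_def by auto
    with preimage show ?thesis by (simp only:)
  qed
  have not_separated: "{a \<in> space (draws I g). \<not> separated I \<epsilon> a} = (\<Union>p\<in>I. B p) \<union> (\<Union>p\<in>I. \<Union>q\<in>I - {p}. C p q)"
    unfolding B_def C_def by (rule not_separated_eq)
  show "{a \<in> space (draws I g). \<not> separated I \<epsilon> a} \<in> sets (draws I g)"
    unfolding not_separated using B_sets C_sets finite_I by (intro sets.Un sets.finite_UN) auto
  let ?N = "real (card I)"
  have "measure (draws I g) {a \<in> space (draws I g). \<not> separated I \<epsilon> a}
      \<le> measure (draws I g) (\<Union>p\<in>I. B p) + measure (draws I g) (\<Union>p\<in>I. \<Union>q\<in>I - {p}. C p q)"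
    unfolding not_separated using B_sets C_sets finite_I by (intro measure_Un_le sets.finite_UN) auto
  also have "\<dots> \<le> (\<Sum>p\<in>I. measure (draws I g) (B p)) + (\<Sum>p\<in>I. measure (draws I g) (\<Union>q\<in>I - {p}. C p q))"
    using B_sets C_sets finite_I by (intro add_mono measure_UNION_le sets.finite_UN) auto
  also have "\<dots> \<le> (\<Sum>p\<in>I. 2 * \<sigma> * \<epsilon>) + (\<Sum>p\<in>I. \<Sum>q\<in>I - {p}. measure (draws I g) (C p q))"
    using C_sets finite_I prob_draw_near_boundary unfolding B_def
    by (intro add_mono sum_mono measure_UNION_le) auto
  also have "\<dots> \<le> (\<Sum>p\<in>I. 2 * \<sigma> * \<epsilon>) + (\<Sum>p\<in>I. \<Sum>q\<in>I - {p}. \<sigma> * \<epsilon>)"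
    using prob_draws_close unfolding C_def by (intro add_mono sum_mono) auto
  also have "\<dots> = ?N * (2 * \<sigma> * \<epsilon>) + (\<Sum>p\<in>I. (?N - 1) * (\<sigma> * \<epsilon>))"
  proof (cases "I = {}")
    case False
    then have "1 \<le> card I" using finite_I by (simp add: Suc_le_eq card_gt_0_iff)
    then show ?thesis using finite_I by (simp add: card_Diff_singleton of_nat_diff)
  qed simp
  also have "\<dots> = \<sigma> * \<epsilon> * (?N\<^sup>2 + ?N)" by (simp add: power2_eq_square algebra_simps)
  finally show "measure (draws I g) {a \<in> space (draws I g). \<not> separated I \<epsilon> a} \<le> \<sigma> * \<epsilon> * (?N\<^sup>2 + ?N)" .
qed

end

section \<open>The regret bound\<close>

lemma one_le_scale: "1 \<le> T \<Longrightarrow> 1 \<le> k \<Longrightarrow> 1 \<le> \<sigma> \<Longrightarrow> 1 \<le> real k ^ 2 * real T ^ 3 * \<sigma>"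
  using mult_mono[of 1 "real k ^ 2" 1 "real T ^ 3"] mult_mono[of 1 "real k ^ 2 * real T ^ 3" 1 \<sigma>]
  by (simp add: one_le_power)

lemma eta_nonneg: "1 \<le> T \<Longrightarrow> 1 \<le> k \<Longrightarrow> 1 \<le> \<sigma> \<Longrightarrow> 0 \<le> eta k T \<sigma>"
  using one_le_scale[of T k \<sigma>] exp_1_minus_2_ge_half unfolding eta_def by simp

lemma regret_bound_ge_T_if_rate_out_of_range:
  assumes "1 \<le> T" "1 \<le> k" "1 \<le> \<sigma>" and out: "\<not> (0 < eta k T \<sigma> \<and> eta k T \<sigma> \<le> 1)"
  shows "real T \<le> 2 * sqrt ((exp 1 - 2) * ln (real k ^ 2 * real T ^ 3 * \<sigma>) * real T) + 1"
proof -
  define c where "c = exp 1 - (2::real)"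
  define L where "L = ln (real k ^ 2 * real T ^ 3 * \<sigma>)"
  have c: "1 / 2 \<le> c" unfolding c_def by (rule exp_1_minus_2_ge_half)
  have \<eta>: "eta k T \<sigma> = sqrt (L / (c * T))" unfolding eta_def c_def L_def ..
  show ?thesis
  proof (cases "eta k T \<sigma> = 0")
    case True
    then have "L = 0" using c \<open>1 \<le> T\<close> unfolding \<eta> by simp
    then have "real k ^ 2 * real T ^ 3 * \<sigma> = 1" using one_le_scale[OF assms(1-3)] unfolding L_def by simp
    moreover have "1 * real T ^ 3 * 1 \<le> real k ^ 2 * real T ^ 3 * \<sigma>"
      using assms by (intro mult_mono one_le_power) auto
    ultimately have "T = 1" using \<open>1 \<le> T\<close> by (simp add: power_le_one_iff)
    then show ?thesis using \<open>L = 0\<close> unfolding c_def[symmetric] L_def[symmetric] by simp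
  next
    case False
    then have "1 < eta k T \<sigma>" using out eta_nonneg[OF assms(1-3)] by linarith
    then have "1 < L / (c * T)" unfolding \<eta> by (simp only: real_sqrt_gt_1_iff)
    then have "(c * T)\<^sup>2 \<le> c * L * T" using c \<open>1 \<le> T\<close> by (simp add: power2_eq_square field_simps)
    then have "c * T \<le> sqrt (c * L * T)" using c by (intro real_le_rsqrt) auto
    moreover have "T \<le> 2 * (c * T)" using mult_right_mono[of 1 "2 * c" "real T"] c by simp
    ultimately show ?thesis unfolding c_def L_def by linarith
  qed
qed

lemma separation_failure_times_T_le_1:
  assumes "1 \<le> T" "1 \<le> k" "0 < \<sigma>"
  defines "N \<equiv> real (card ({1..T} \<times> {1..<k}))"
  shows "real T * (\<sigma> * (1 / (real k ^ 2 * real T ^ 3 * \<sigma>)) * (N\<^sup>2 + N)) \<le> 1"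
proof -
  have N: "N = real T * (real k - 1)" unfolding N_def using assms by (simp add: card_cartesian_product of_nat_diff)
  have "1 * (2 * real k - 1) \<le> real T * (2 * real k - 1)"
    using assms by (intro mult_right_mono) auto
  then have "real T * (real k - 1) \<le> real T * (real T * (2 * real k - 1))"
    by (intro mult_left_mono) auto
  then have "N\<^sup>2 + N \<le> real k ^ 2 * real T ^ 2" unfolding N by (simp add: power2_eq_square algebra_simps)
  then have "real T * (N\<^sup>2 + N) \<le> real k ^ 2 * real T ^ 3"
    by (smt (verit) mult_left_mono of_nat_0_le_iff power2_eq_square power3_eq_cube mult.assoc mult.left_commute)
  then show ?thesis using assms by (simp add: field_simps)
qed

lemma nature_measure_eq_draws:
  "nature_measure T k g = draws ({1..T} \<times> {1..<k}) (\<lambda>p. g (fst p) (snd p))"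
  unfolding nature_measure_def by (rule PiM_cong) auto

context
  fixes T k :: nat and \<sigma> :: real and g :: "nat \<Rightarrow> nat \<Rightarrow> real \<Rightarrow> real"
  assumes T: "1 \<le> T" and k: "1 \<le> k" and sigma: "1 \<le> \<sigma>"
    and dens: "\<forall>t\<in>{1..T}. \<forall>i\<in>{1..<k}. bounded_density \<sigma> (g t i)"
begin

lemma bounded_density_draw: "p \<in> {1..T} \<times> {1..<k} \<Longrightarrow> bounded_density \<sigma> (g (fst p) (snd p))"
  using dens by auto

lemma prob_space_nature_measure: "prob_space (nature_measure T k g)"
  unfolding nature_measure_eq_draws by (rule prob_space_draws[OF bounded_density_draw])

lemma prob_nature_not_separated:
  defines "E \<equiv> {a \<in> space (nature_measure T k g). \<not> separated ({1..T} \<times> {1..<k}) (1 / (real k ^ 2 * real T ^ 3 * \<sigma>)) a}"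
  shows "E \<in> sets (nature_measure T k g)" and "real T * measure (nature_measure T k g) E \<le> 1"
proof -
  let ?I = "{1..T} \<times> {1..<k}" and ?\<epsilon> = "1 / (real k ^ 2 * real T ^ 3 * \<sigma>)"
  have "finite ?I" "0 < ?\<epsilon>" "0 \<le> \<sigma>" using one_le_scale[OF T k sigma] sigma by simp_all
  note not_separated = prob_not_separated[OF this bounded_density_draw]
  show "E \<in> sets (nature_measure T k g)"
    using not_separated unfolding E_def nature_measure_eq_draws by simp
  have "measure (nature_measure T k g) E \<le> \<sigma> * ?\<epsilon> * ((real (card ?I))\<^sup>2 + real (card ?I))"
    using not_separated unfolding E_def nature_measure_eq_draws by simp
  then have "real T * measure (nature_measure T k g) E \<le> real T * (\<sigma> * ?\<epsilon> * ((real (card ?I))\<^sup>2 + real (card ?I)))"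
    by (rule mult_left_mono) simp
  also have "\<dots> \<le> 1" using separation_failure_times_T_le_1[OF T k, of \<sigma>] sigma by simp
  finally show "real T * measure (nature_measure T k g) E \<le> 1" .
qed

lemma expected_regret_le_learning_rate:
  assumes "0 < \<eta>" "\<eta> \<le> 1" and vals: "\<forall>t\<in>{1..T}. \<forall>i\<in>{1..k}. 0 \<le> v t i \<and> v t i \<le> 1"
  shows "(\<integral>a. (\<integral>xs. regret T k v a xs \<partial>alg_measure \<eta> k v T a) \<partial>nature_measure T k g)
    \<le> (ln (real k ^ 2 * real T ^ 3 * \<sigma>) + (exp 1 - 2) * \<eta>\<^sup>2 * T) / \<eta> + 1"
proof -
  define \<epsilon> where "\<epsilon> = 1 / (real k ^ 2 * real T ^ 3 * \<sigma>)"
  define B where "B = (ln (1 / \<epsilon>) + (exp 1 - 2) * \<eta>\<^sup>2 * T) / \<eta>"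
  define R where "R a = (\<integral>xs. regret T k v a xs \<partial>alg_measure \<eta> k v T a)" for a
  define N where "N = nature_measure T k g"
  define E where "E = {a \<in> space N. \<not> separated ({1..T} \<times> {1..<k}) \<epsilon> a}"
  interpret N: prob_space N unfolding N_def by (rule prob_space_nature_measure)
  have \<epsilon>: "0 < \<epsilon>" "\<epsilon> \<le> 1" unfolding \<epsilon>_def using one_le_scale[OF T k sigma] by auto
  have "0 \<le> B" unfolding B_def using \<epsilon> \<open>0 < \<eta>\<close> exp_1_minus_2_ge_half by simp
  have pointwise: "R a \<le> B + real T * indicator E a" if "a \<in> space N" for a
  proof (cases "a \<in> E")
    case True
    have "R a \<le> T" unfolding R_def using \<open>0 < \<eta>\<close> by (intro expected_regret_le_T[OF k vals]) simp
    with True \<open>0 \<le> B\<close> show ?thesis by simp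
  next
    case False
    with that have "separated ({1..T} \<times> {1..<k}) \<epsilon> a" unfolding E_def by simp
    from expected_regret_le_separated[OF k vals _ this \<epsilon> assms(1,2)] \<open>0 < \<eta>\<close> False
    show ?thesis unfolding R_def B_def by simp
  qed
  note E = prob_nature_not_separated[folded \<epsilon>_def N_def, folded E_def]
  have "(\<integral>a. R a \<partial>N) \<le> B + real T * N.prob E"
    using N.integral_le_off_event[OF E(1) \<open>0 \<le> B\<close> _ pointwise] by simp
  also have "\<dots> \<le> B + 1" using E(2) by simp
  finally show ?thesis unfolding R_def B_def \<epsilon>_def N_def by simp
qed

end

theorem corollary1:
  fixes T k :: nat and \<sigma> :: real
    and g :: "nat \<Rightarrow> nat \<Rightarrow> real \<Rightarrow> real"
    and v :: "nat \<Rightarrow> nat \<Rightarrow> real"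
  assumes "T \<ge> 1" and "k \<ge> 1" and "\<sigma> \<ge> 1"
    and dens: "\<forall>t\<in>{1..T}. \<forall>i\<in>{1..<k}.
         g t i \<in> borel_measurable borel \<and>
         (\<forall>x. 0 \<le> g t i x \<and> g t i x \<le> \<sigma>) \<and>
         (\<forall>x. x \<notin> {0<..<1} \<longrightarrow> g t i x = 0) \<and>
         prob_space (density lborel (\<lambda>x. ennreal (g t i x)))"
    and vals: "\<forall>t\<in>{1..T}. \<forall>i\<in>{1..k}. 0 \<le> v t i \<and> v t i \<le> 1"
  shows "(\<integral>a. (\<integral>xs. regret T k v a xs \<partial>(alg_measure (eta k T \<sigma>) k v T a))
            \<partial>(nature_measure T k g))
         \<le> 2 * sqrt ((exp 1 - 2) * ln (real k ^ 2 * real T ^ 3 * \<sigma>) * real T) + 1"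
proof -
  define \<eta> where "\<eta> = eta k T \<sigma>"
  have dens: "\<forall>t\<in>{1..T}. \<forall>i\<in>{1..<k}. bounded_density \<sigma> (g t i)"
    using dens unfolding bounded_density_def .
  show ?thesis
  proof (cases "0 < \<eta> \<and> \<eta> \<le> 1")
    case True
    then have "(\<integral>a. (\<integral>xs. regret T k v a xs \<partial>alg_measure \<eta> k v T a) \<partial>nature_measure T k g)
        \<le> (ln (real k ^ 2 * real T ^ 3 * \<sigma>) + (exp 1 - 2) * \<eta>\<^sup>2 * T) / \<eta> + 1"
      using True by (intro expected_regret_le_learning_rate[OF assms(1-3) dens _ _ vals]) auto
    also have "(ln (real k ^ 2 * real T ^ 3 * \<sigma>) + (exp 1 - 2) * \<eta>\<^sup>2 * T) / \<eta>
        = 2 * sqrt ((exp 1 - 2) * ln (real k ^ 2 * real T ^ 3 * \<sigma>) * real T)"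
      using True exp_1_minus_2_ge_half \<open>1 \<le> T\<close> by (intro learning_rate_tuned) (auto simp: \<eta>_def eta_def)
    finally show ?thesis unfolding \<eta>_def .
  next
    case False
    have "(\<integral>xs. regret T k v a xs \<partial>alg_measure (eta k T \<sigma>) k v T a) \<le> T" for a
      by (rule expected_regret_le_T[OF \<open>1 \<le> k\<close> vals eta_nonneg[OF assms(1-3)]])
    moreover have "real T \<le> 2 * sqrt ((exp 1 - 2) * ln (real k ^ 2 * real T ^ 3 * \<sigma>) * real T) + 1"
      using regret_bound_ge_T_if_rate_out_of_range[OF assms(1-3)] False unfolding \<eta>_def .
    moreover note prob_space_nature_measure[OF assms(1-3) dens]
    ultimately show ?thesis
      by (intro prob_space.integral_le_const_nonneg[of "nature_measure T k g"]) (auto intro: order_trans)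
  qed
qed

end
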